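(* Let $A\in\mathbb{R}^{m\times n}$, $b\in\mathbb{R}^m$, $f(x)=\frac12\|Ax-b\|^2$, and let $x^k,x^{k-1}\in\mathbb{R}^n$ with $\nabla f(x^k)\neq 0$ and $x^k\neq x^{k-1}$. Let $g=\nabla f(x^k)/\|\nabla f(x^k)\|$, $d=(x^k-x^{k-1})/\|x^k-x^{k-1}\|$, $\epsilon=g^td$, and assume $\epsilon^2<1$. Let $S_{11}=g^tA^tAg$, $S_{12}=g^tA^tAd$, $S_{22}=d^tA^tAd$, $\eta_1=1-\epsilon^2$, $\eta_2=-S_{11}-S_{22}+2\epsilon S_{12}$, $\eta_3=S_{11}S_{22}-S_{12}^2$, and $$\sigma=\frac{-\eta_2+\sqrt{\eta_2^2-4\eta_1\eta_3}}{2\eta_1}.$$ Then $\sigma\ge S_{11}$ and $\sigma\ge S_{22}$; consequently the linear system $$\begin{pmatrix}1&\epsilon\\ \epsilon&1\end{pmatrix}\begin{pmatrix}\tau\\ \rho\end{pmatrix}=\begin{pmatrix}\sqrt{\sigma-S_{11}}\\ \sqrt{\sigma-S_{22}}\,\mathrm{sgn}(\epsilon\sigma-S_{12})\end{pmatrix}$$ has a real solution $(\tau,\rho)$, so that $u=\tau g+\rho d$ exists.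
   Context: $\|\cdot\|$ denotes the Euclidean norm; $\mathrm{sgn}$ is the sign function. The discriminant $\eta_2^2-4\eta_1\eta_3$ is nonnegative under these assumptions, so $\sigma$ is a real number (the larger root of $\eta_1\sigma^2+\eta_2\sigma+\eta_3=0$). *)

theory Defs
  imports "HOL-Analysis.Analysis"
begin

end

theory Submission
  imports Defs
begin

text \<open>\<sigma> is the larger root of \<eta>1 t^2 + \<eta>2 t + \<eta>3, and since \<eta>1 > 0 every point where
  this parabola is nonpositive lies below \<sigma>. At t = S11 it equals -(\<epsilon> S11 - S12)^2,
  and symmetrically at t = S22, so both entries are at most \<sigma>. The linear system has
  determinant 1 - \<epsilon>^2 \<noteq> 0 and is therefore solvable.\<close>

lemma le_larger_quadratic_root:
  fixes a b c x :: real
  assumes a_pos: "a > 0" and nonpos: "a * x\<^sup>2 + b * x + c \<le> 0"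
  shows "x \<le> (- b + sqrt (b\<^sup>2 - 4 * a * c)) / (2 * a)"
proof -
  have discr: "b\<^sup>2 - 4 * a * c = (2 * a * x + b)\<^sup>2 - 4 * a * (a * x\<^sup>2 + b * x + c)"
    by (simp add: power2_eq_square algebra_simps)
  have "(2 * a * x + b)\<^sup>2 \<le> b\<^sup>2 - 4 * a * c"
    unfolding discr using a_pos nonpos by (simp add: mult_nonneg_nonpos)
  then have "\<bar>2 * a * x + b\<bar> \<le> sqrt (b\<^sup>2 - 4 * a * c)"
    by (metis real_sqrt_abs real_sqrt_le_mono)
  then have "2 * a * x \<le> - b + sqrt (b\<^sup>2 - 4 * a * c)"
    by linarith
  then show ?thesis
    using a_pos by (simp add: field_simps)
qed

lemma gram_quadratic_at_diagonal_entry: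
  fixes e s11 s12 s22 x :: real
  assumes "x = s11 \<or> x = s22"
  shows "(1 - e\<^sup>2) * x\<^sup>2 + (- s11 - s22 + 2 * e * s12) * x + (s11 * s22 - s12\<^sup>2)
           = - (e * x - s12)\<^sup>2"
  using assms by (auto simp: power2_eq_square algebra_simps)

lemma diagonal_entry_le_gram_root:
  fixes e s11 s12 s22 x :: real
  assumes e: "e\<^sup>2 < 1" and x: "x = s11 \<or> x = s22"
  shows "x \<le> (- (- s11 - s22 + 2 * e * s12)
               + sqrt ((- s11 - s22 + 2 * e * s12)\<^sup>2 - 4 * (1 - e\<^sup>2) * (s11 * s22 - s12\<^sup>2)))
             / (2 * (1 - e\<^sup>2))"
proof (rule le_larger_quadratic_root)
  show "1 - e\<^sup>2 > 0"
    using e by simp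
  show "(1 - e\<^sup>2) * x\<^sup>2 + (- s11 - s22 + 2 * e * s12) * x + (s11 * s22 - s12\<^sup>2) \<le> 0"
    unfolding gram_quadratic_at_diagonal_entry[OF x] by simp
qed

lemma symmetric_unit_diagonal_system_solvable:
  fixes e p q :: real
  assumes "e\<^sup>2 \<noteq> 1"
  shows "\<exists>\<tau> \<rho>. \<tau> + e * \<rho> = p \<and> e * \<tau> + \<rho> = q"
proof (intro exI conjI)
  have det: "1 - e\<^sup>2 \<noteq> 0"
    using assms by simp
  have "p - e * q + e * (q - e * p) = p * (1 - e\<^sup>2)"
    by (simp add: algebra_simps power2_eq_square)
  then show "(p - e * q) / (1 - e\<^sup>2) + e * ((q - e * p) / (1 - e\<^sup>2)) = p"
    using det by (simp add: add_divide_distrib [symmetric])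
  have "e * (p - e * q) + (q - e * p) = q * (1 - e\<^sup>2)"
    by (simp add: algebra_simps power2_eq_square)
  then show "e * ((p - e * q) / (1 - e\<^sup>2)) + (q - e * p) / (1 - e\<^sup>2) = q"
    using det by (simp add: add_divide_distrib [symmetric])
qed

theorem claim2:
  fixes A :: "real ^ 'n ^ 'm" and b :: "real ^ 'm"
    and xk xk1 gradf :: "real ^ 'n"
    and f :: "real ^ 'n \<Rightarrow> real"
  assumes f_def: "f = (\<lambda>x. (1/2) * (norm (A *v x - b))\<^sup>2)"
    and grad: "GDERIV f xk :> gradf"
    and gnz: "gradf \<noteq> 0"
    and xne: "xk \<noteq> xk1"
  defines "g \<equiv> (1 / norm gradf) *\<^sub>R gradf"
    and "d \<equiv> (1 / norm (xk - xk1)) *\<^sub>R (xk - xk1)"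
  defines "\<epsilon> \<equiv> g \<bullet> d"
  assumes eps: "\<epsilon>\<^sup>2 < 1"
  defines "S11 \<equiv> g \<bullet> ((transpose A ** A) *v g)"
    and "S12 \<equiv> g \<bullet> ((transpose A ** A) *v d)"
    and "S22 \<equiv> d \<bullet> ((transpose A ** A) *v d)"
  defines "\<eta>1 \<equiv> 1 - \<epsilon>\<^sup>2"
    and "\<eta>2 \<equiv> - S11 - S22 + 2 * \<epsilon> * S12"
    and "\<eta>3 \<equiv> S11 * S22 - S12\<^sup>2"
  defines "\<sigma> \<equiv> (- \<eta>2 + sqrt (\<eta>2\<^sup>2 - 4 * \<eta>1 * \<eta>3)) / (2 * \<eta>1)"
  shows "\<sigma> \<ge> S11 \<and> \<sigma> \<ge> S22 \<and>
    (\<exists>\<tau> \<rho>. \<tau> + \<epsilon> * \<rho> = sqrt (\<sigma> - S11) \<and>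
            \<epsilon> * \<tau> + \<rho> = sqrt (\<sigma> - S22) * sgn (\<epsilon> * \<sigma> - S12))"
proof (intro conjI)
  show "\<sigma> \<ge> S11" "\<sigma> \<ge> S22"
    unfolding \<sigma>_def \<eta>1_def \<eta>2_def \<eta>3_def
    using diagonal_entry_le_gram_root[OF eps] by blast+
  show "\<exists>\<tau> \<rho>. \<tau> + \<epsilon> * \<rho> = sqrt (\<sigma> - S11) \<and>
            \<epsilon> * \<tau> + \<rho> = sqrt (\<sigma> - S22) * sgn (\<epsilon> * \<sigma> - S12)"
    using eps by (intro symmetric_unit_diagonal_system_solvable) simp
qed

end
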